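(* Let $n,g$ be integers with $0\leq g\leq \lfloor \frac{n-3}{2}\rfloor$, and let $T$ be a tree of order $n$. Then $T$ has an $R_g$-cutset with $\kappa_g(T)=n-2g-2$ if and only if $T$ is of type $T_n^*$ (with respect to $g$).
   Context: All graphs are finite and simple. A tree $T$ of order $n$ is of type $T_n^*$ (with respect to $g$) if it contains a vertex $v$ such that $T-v$ has two connected components with exactly $g+1$ vertices each, and every other connected component of $T-v$ (there may be none) has at most $g$ vertices. Equivalently, $T$ is obtained from two trees $T',T''$ of order $g+1$ and trees $T_1,\ldots,T_r$ ($r\ge 0$) each of order at most $g$ with $\sum_i|V(T_i)|=n-2g-3$, by adding a new vertex $v$ and one edge from $v$ to each of $T',T'',T_1,\ldots,T_r$. A set $S\subseteq V(G)$ is a cutset if $G-S$ is disconnected. For a non-negative integer $g$, a cutset $S$ is an $R_g$-cutset if every connected component of $G-S$ has at least $g+1$ vertices. If $G$ has at least one $R_g$-cutset, the $g$-extra connectivity $\kappa_g(G)$ is the minimum cardinality of an $R_g$-cutset of $G$. *)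

theory Defs
  imports Main
begin

definition simple_graph :: "'a set \<Rightarrow> 'a set set \<Rightarrow> bool" where
  "simple_graph V E \<longleftrightarrow> finite V \<and>
     (\<forall>e\<in>E. \<exists>u v. e = {u, v} \<and> u \<noteq> v \<and> u \<in> V \<and> v \<in> V)"

definition adj :: "'a set set \<Rightarrow> 'a \<Rightarrow> 'a \<Rightarrow> bool" where
  "adj E u v \<longleftrightarrow> {u, v} \<in> E"

definition reach :: "'a set \<Rightarrow> 'a set set \<Rightarrow> 'a \<Rightarrow> 'a \<Rightarrow> bool" where
  "reach V E u v \<longleftrightarrow> u \<in> V \<and> v \<in> V \<and>
     (\<lambda>x y. x \<in> V \<and> y \<in> V \<and> adj E x y)\<^sup>*\<^sup>* u v"

definition connected_graph :: "'a set \<Rightarrow> 'a set set \<Rightarrow> bool" where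
  "connected_graph V E \<longleftrightarrow> V \<noteq> {} \<and> (\<forall>u\<in>V. \<forall>v\<in>V. reach V E u v)"

definition is_cycle :: "'a set \<Rightarrow> 'a set set \<Rightarrow> 'a list \<Rightarrow> bool" where
  "is_cycle V E xs \<longleftrightarrow> length xs \<ge> 3 \<and> distinct xs \<and> set xs \<subseteq> V \<and>
     (\<forall>i < length xs - 1. adj E (xs ! i) (xs ! Suc i)) \<and>
     adj E (last xs) (hd xs)"

definition acyclic_graph :: "'a set \<Rightarrow> 'a set set \<Rightarrow> bool" where
  "acyclic_graph V E \<longleftrightarrow> (\<nexists>xs. is_cycle V E xs)"

definition is_tree :: "'a set \<Rightarrow> 'a set set \<Rightarrow> bool" where
  "is_tree V E \<longleftrightarrow> simple_graph V E \<and> connected_graph V E \<and> acyclic_graph V E"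

definition del_verts_V :: "'a set \<Rightarrow> 'a set \<Rightarrow> 'a set" where
  "del_verts_V V S = V - S"

definition del_verts_E :: "'a set \<Rightarrow> 'a set set \<Rightarrow> 'a set \<Rightarrow> 'a set set" where
  "del_verts_E V E S = {e \<in> E. e \<subseteq> V - S}"

definition components :: "'a set \<Rightarrow> 'a set set \<Rightarrow> 'a set set" where
  "components V E = {{v. reach V E u v} | u. u \<in> V}"

definition cutset :: "'a set \<Rightarrow> 'a set set \<Rightarrow> 'a set \<Rightarrow> bool" where
  "cutset V E S \<longleftrightarrow> S \<subseteq> V \<and> del_verts_V V S \<noteq> {} \<and>
     \<not> connected_graph (del_verts_V V S) (del_verts_E V E S)"

definition Rg_cutset :: "nat \<Rightarrow> 'a set \<Rightarrow> 'a set set \<Rightarrow> 'a set \<Rightarrow> bool" where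
  "Rg_cutset g V E S \<longleftrightarrow> cutset V E S \<and>
     (\<forall>C \<in> components (del_verts_V V S) (del_verts_E V E S). card C \<ge> g + 1)"

definition extra_connectivity :: "nat \<Rightarrow> 'a set \<Rightarrow> 'a set set \<Rightarrow> nat" where
  "extra_connectivity g V E = Min {card S | S. Rg_cutset g V E S}"

definition type_Tn_star :: "nat \<Rightarrow> 'a set \<Rightarrow> 'a set set \<Rightarrow> bool" where
  "type_Tn_star g V E \<longleftrightarrow> (\<exists>v\<in>V.
     let cs = components (del_verts_V V {v}) (del_verts_E V E {v}) in
     \<exists>C1\<in>cs. \<exists>C2\<in>cs. C1 \<noteq> C2 \<and> card C1 = g + 1 \<and> card C2 = g + 1 \<and>
       (\<forall>C\<in>cs - {C1, C2}. card C \<le> g))"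

end

theory Submission
  imports Defs "HOL-Library.Transitive_Closure_Table"
begin

text \<open>
  If T is of type T_n^* at v, with components C1 and C2 of order g+1 in T - v, then
  V - (C1 \<union> C2) is an R_g-cutset with n - 2g - 2 vertices, and it is minimum: for any
  R_g-cutset S, a component of T - S avoiding v lies in a component of T - v and, having order
  at least g+1, fills C1 or C2; as C1 and C2 contain neighbours of v, v itself cannot survive
  in T - S, so T - S lies inside C1 \<union> C2.

  Conversely, take two components A and B of T - S for an R_g-cutset S. The last vertex x
  outside A on a path from B to A separates A from B in T - x, as T is acyclic, so T - x has
  two components of order at least g+1. Deleting everything except the union U of the
  components of T - x of order at least g+1 leaves an R_g-cutset, so |U| \<le> 2g+2 when
  \<kappa>_g(T) = n - 2g - 2; hence there are exactly two of them, each of order g+1.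
\<close>

subsection \<open>Connectivity inside a vertex set\<close>

text \<open>
  component E W u is the vertex set of the component of the induced subgraph G[W] containing u;
  the edge-closed subsets of W are exactly the unions of such components.
\<close>

definition edge_in :: "'a set set \<Rightarrow> 'a set \<Rightarrow> 'a \<Rightarrow> 'a \<Rightarrow> bool" where
  "edge_in E W x y \<longleftrightarrow> x \<in> W \<and> y \<in> W \<and> {x, y} \<in> E"

definition linked :: "'a set set \<Rightarrow> 'a set \<Rightarrow> 'a \<Rightarrow> 'a \<Rightarrow> bool" where
  "linked E W u w \<longleftrightarrow> u \<in> W \<and> w \<in> W \<and> (edge_in E W)\<^sup>*\<^sup>* u w"

definition component :: "'a set set \<Rightarrow> 'a set \<Rightarrow> 'a \<Rightarrow> 'a set" where
  "component E W u = {w. linked E W u w}"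

definition edge_closed :: "'a set set \<Rightarrow> 'a set \<Rightarrow> 'a set \<Rightarrow> bool" where
  "edge_closed E W U \<longleftrightarrow> U \<subseteq> W \<and> (\<forall>x\<in>U. \<forall>y\<in>W. {x, y} \<in> E \<longrightarrow> y \<in> U)"

lemma symp_edge_in: "symp (edge_in E W)"
  by (auto intro: sympI simp: edge_in_def insert_commute)

lemma linked_refl: "u \<in> W \<Longrightarrow> linked E W u u"
  by (simp add: linked_def)

lemma linked_edge: "edge_in E W x y \<Longrightarrow> linked E W x y"
  by (auto simp: linked_def edge_in_def)

lemma linked_trans: "linked E W u v \<Longrightarrow> linked E W v w \<Longrightarrow> linked E W u w"
  unfolding linked_def by (meson rtranclp_trans)

lemma linked_sym: "linked E W u w \<Longrightarrow> linked E W w u"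
  unfolding linked_def by (meson sympD symp_rtranclp symp_edge_in)

lemma linked_in: "linked E W u w \<Longrightarrow> u \<in> W \<and> w \<in> W"
  by (simp add: linked_def)

lemma linked_mono:
  assumes "W \<subseteq> W'" "linked E W u w"
  shows "linked E W' u w"
proof -
  have sub: "edge_in E W \<le> edge_in E W'"
    using assms(1) by (auto simp: edge_in_def)
  have "(edge_in E W)\<^sup>*\<^sup>* u w"
    using assms(2) by (simp add: linked_def)
  then have "(edge_in E W')\<^sup>*\<^sup>* u w"
    by (rule rtranclp_mono[THEN predicate2D, OF sub])
  then show ?thesis
    using assms by (auto simp: linked_def)
qed

lemma linked_edge_closed:
  assumes "linked E W u w" "u \<in> U" "edge_closed E W U"
  shows "linked E U u w"
proof -
  have "(edge_in E W)\<^sup>*\<^sup>* u w"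
    using assms(1) by (simp add: linked_def)
  then have "w \<in> U \<and> (edge_in E U)\<^sup>*\<^sup>* u w"
  proof (induction rule: rtranclp_induct)
    case (step x y)
    then have "x \<in> U" "y \<in> U"
      using assms(3) by (auto simp: edge_closed_def edge_in_def)
    then have "edge_in E U x y"
      using step.hyps(2) by (simp add: edge_in_def)
    with step.IH \<open>y \<in> U\<close> show ?case
      by (meson rtranclp.rtrancl_into_rtrancl)
  qed (use assms(2) in simp)
  then show ?thesis
    using assms(2) by (simp add: linked_def)
qed

lemma component_subset: "component E W u \<subseteq> W"
  by (auto simp: component_def linked_def)

lemma self_in_component: "u \<in> W \<Longrightarrow> u \<in> component E W u"
  by (simp add: component_def linked_refl)

lemma component_eq:
  assumes "u \<in> component E W c"
  shows "component E W u = component E W c"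
proof -
  have "linked E W c u"
    using assms by (simp add: component_def)
  then have "linked E W u w \<longleftrightarrow> linked E W c w" for w
    by (meson linked_trans linked_sym)
  then show ?thesis
    by (simp add: component_def)
qed

lemma components_disjoint:
  "component E W c \<noteq> component E W d \<Longrightarrow> component E W c \<inter> component E W d = {}"
  using component_eq by (metis disjoint_iff)

lemma edge_closed_component: "edge_closed E W (component E W c)"
  unfolding edge_closed_def
proof (intro conjI ballI impI component_subset)
  fix x y
  assume "x \<in> component E W c" "y \<in> W" "{x, y} \<in> E"
  then have "linked E W c x"
    by (simp add: component_def)
  moreover from this have "edge_in E W x y"
    using \<open>y \<in> W\<close> \<open>{x, y} \<in> E\<close> linked_in by (fastforce simp: edge_in_def)
  ultimately have "linked E W c y"
    by (rule linked_trans[OF _ linked_edge])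
  then show "y \<in> component E W c"
    by (simp add: component_def)
qed

lemma linked_within_component:
  assumes "w \<in> component E W c"
  shows "linked E (component E W c) c w"
proof (rule linked_edge_closed)
  show "linked E W c w"
    using assms by (simp add: component_def)
  then show "c \<in> component E W c"
    by (simp add: self_in_component linked_in)
qed (rule edge_closed_component)

lemma component_edge_closed_eq:
  assumes "edge_closed E W U" "u \<in> U"
  shows "component E U u = component E W u"
proof -
  have "U \<subseteq> W"
    using assms(1) by (simp add: edge_closed_def)
  then show ?thesis
    unfolding component_def
    using linked_edge_closed[OF _ assms(2,1)] linked_mono[of U W E u] by blast
qed

lemma component_subset_component:
  assumes "component E X u \<subseteq> W"
  shows "component E X u \<subseteq> component E W u"
proof
  fix w
  assume "w \<in> component E X u"
  then have "linked E (component E X u) u w"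
    by (rule linked_within_component)
  then have "linked E W u w"
    by (rule linked_mono[OF assms])
  then show "w \<in> component E W u"
    by (simp add: component_def)
qed

lemma edge_closed_Union:
  assumes "\<forall>C\<in>F. edge_closed E W C"
  shows "edge_closed E W (\<Union>F)"
  using assms unfolding edge_closed_def by blast

lemma card_Union_components:
  assumes "finite W" "F \<subseteq> component E W ` W"
  shows "card (\<Union>F) = (\<Sum>C\<in>F. card C)"
proof (rule card_Union_disjoint)
  show "pairwise disjnt F"
  proof (rule pairwiseI)
    fix C D
    assume "C \<in> F" "D \<in> F" "C \<noteq> D"
    moreover obtain c d where "C = component E W c" "D = component E W d"
      using \<open>C \<in> F\<close> \<open>D \<in> F\<close> assms(2) by blast
    ultimately show "disjnt C D"
      using components_disjoint by (simp add: disjnt_def)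
  qed
  show "finite C" if "C \<in> F" for C
    using that assms(2) finite_subset[OF component_subset assms(1)] by blast
qed

subsection \<open>Paths and acyclicity\<close>

inductive_cases rtrancl_path_NilE: "rtrancl_path r x [] y"
inductive_cases rtrancl_path_ConsE: "rtrancl_path r x (z # zs) y"

lemma rtrancl_path_nth:
  "rtrancl_path r x xs y \<Longrightarrow> i < length xs \<Longrightarrow> r ((x # xs) ! i) (xs ! i)"
proof (induction arbitrary: i rule: rtrancl_path.induct)
  case (step x y ys z)
  then show ?case
    by (cases i) auto
qed simp

lemma rtrancl_path_last: "rtrancl_path r x xs y \<Longrightarrow> last (x # xs) = y"
  by (induction rule: rtrancl_path.induct) auto

lemma rtrancl_path_edge_in_subset: "rtrancl_path (edge_in E W) x xs y \<Longrightarrow> set xs \<subseteq> W"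
  by (induction rule: rtrancl_path.induct) (auto simp: edge_in_def)

lemma linked_if_rtrancl_path:
  assumes "rtrancl_path (edge_in E W) x xs y" "x \<in> U" "set xs \<subseteq> U"
  shows "linked E U x y"
  using assms
proof (induction rule: rtrancl_path.induct)
  case (step x y ys z)
  then have "edge_in E U x y"
    by (simp add: edge_in_def)
  moreover have "linked E U y z"
    using step by simp
  ultimately show ?case
    by (rule linked_trans[OF linked_edge])
qed (simp add: linked_refl)

lemma linked_obtains_distinct_path:
  assumes "linked E W x y"
  obtains xs where "rtrancl_path (edge_in E W) x xs y" "distinct (x # xs)" "set xs \<subseteq> W"
proof -
  obtain xs where "rtrancl_path (edge_in E W) x xs y"
    using assms by (auto simp: linked_def rtranclp_eq_rtrancl_path)
  then obtain xs' where path: "rtrancl_path (edge_in E W) x xs' y" and "distinct (x # xs')"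
    by (rule rtrancl_path_distinct)
  moreover have "set xs' \<subseteq> W"
    using path by (rule rtrancl_path_edge_in_subset)
  ultimately show thesis
    by (rule that)
qed

lemma linked_obtains_neighbour:
  assumes "linked E W x y" "x \<noteq> y"
  obtains z where "z \<in> W" "{x, z} \<in> E" "linked E (W - {x}) z y"
proof -
  obtain xs where xs: "rtrancl_path (edge_in E W) x xs y" "distinct (x # xs)" "set xs \<subseteq> W"
    using assms(1) by (rule linked_obtains_distinct_path)
  then obtain z zs where zs: "xs = z # zs"
    using assms(2) by (cases xs) (auto elim: rtrancl_path_NilE)
  with xs(1) have edge: "edge_in E W x z" and path: "rtrancl_path (edge_in E W) z zs y"
    by (auto elim: rtrancl_path_ConsE)
  have "set (z # zs) \<subseteq> W - {x}"
    using xs(2,3) zs by auto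
  then have "linked E (W - {x}) z y"
    using linked_if_rtrancl_path[OF path] by simp
  with edge show thesis
    using that[of z] by (simp add: edge_in_def)
qed

lemma linked_obtains_exit_edge:
  assumes "linked E V b a" "b \<notin> A" "a \<in> A"
  obtains x y where "x \<in> V - A" "y \<in> A" "{x, y} \<in> E" "linked E (V - A) b x"
proof -
  have "(edge_in E V)\<^sup>*\<^sup>* b a" and "b \<in> V"
    using assms(1) by (simp_all add: linked_def)
  then have "linked E (V - A) b a \<or>
      (\<exists>x y. x \<in> V - A \<and> y \<in> A \<and> {x, y} \<in> E \<and> linked E (V - A) b x)"
  proof (induction rule: rtranclp_induct)
    case base
    then show ?case
      using assms(2) by (simp add: linked_refl)
  next
    case (step c d)
    show ?case
    proof (cases "linked E (V - A) b c")
      case True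
      then have "c \<in> V - A"
        by (simp add: linked_def)
      show ?thesis
      proof (cases "d \<in> A")
        case True
        then show ?thesis
          using \<open>linked E (V - A) b c\<close> \<open>c \<in> V - A\<close> step.hyps(2) by (auto simp: edge_in_def)
      next
        case False
        then have "edge_in E (V - A) c d"
          using \<open>c \<in> V - A\<close> step.hyps(2) by (simp add: edge_in_def)
        then have "linked E (V - A) b d"
          by (rule linked_trans[OF \<open>linked E (V - A) b c\<close> linked_edge])
        then show ?thesis ..
      qed
    next
      case False
      with step.IH step.prems show ?thesis
        by simp
    qed
  qed
  moreover have "\<not> linked E (V - A) b a"
    using assms(3) by (simp add: linked_def)
  ultimately show thesis
    using that by blast
qed

lemma acyclic_neighbours_not_linked:
  assumes "acyclic_graph V E" "x \<in> V" "{x, y} \<in> E" "{x, z} \<in> E" "y \<noteq> z"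
  shows "\<not> linked E (V - {x}) y z"
proof
  assume "linked E (V - {x}) y z"
  then obtain ys where path: "rtrancl_path (edge_in E (V - {x})) y ys z"
    and dist: "distinct (y # ys)" and ys: "set ys \<subseteq> V - {x}"
    by (rule linked_obtains_distinct_path)
  have "y \<in> V - {x}"
    using \<open>linked E (V - {x}) y z\<close> by (simp add: linked_def)
  have "ys \<noteq> []"
    using path assms(5) by (auto elim: rtrancl_path_NilE)
  have "is_cycle V E (x # y # ys)"
    unfolding is_cycle_def
  proof (intro conjI allI impI)
    show "3 \<le> length (x # y # ys)"
      using \<open>ys \<noteq> []\<close> by (cases ys) auto
    show "distinct (x # y # ys)" "set (x # y # ys) \<subseteq> V"
      using dist ys \<open>y \<in> V - {x}\<close> assms(2) by auto
    show "adj E (last (x # y # ys)) (hd (x # y # ys))"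
      using rtrancl_path_last[OF path] assms(4) by (simp add: adj_def insert_commute)
  next
    fix i
    assume i: "i < length (x # y # ys) - 1"
    show "adj E ((x # y # ys) ! i) ((x # y # ys) ! Suc i)"
    proof (cases i)
      case 0
      then show ?thesis
        using assms(3) by (simp add: adj_def)
    next
      case (Suc j)
      then have "edge_in E (V - {x}) ((y # ys) ! j) (ys ! j)"
        using i by (intro rtrancl_path_nth[OF path]) simp
      then show ?thesis
        using Suc by (simp add: adj_def edge_in_def)
    qed
  qed
  then show False
    using assms(1) by (simp add: acyclic_graph_def)
qed

subsection \<open>Cutsets in terms of components\<close>

lemma reach_eq_linked: "reach V E u w \<longleftrightarrow> linked E V u w"
proof -
  have "(\<lambda>x y. x \<in> V \<and> y \<in> V \<and> adj E x y) = edge_in E V"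
    by (auto simp: adj_def edge_in_def fun_eq_iff)
  then show ?thesis
    by (simp add: reach_def linked_def)
qed

lemma reach_del_verts_eq_linked:
  "reach (V - S) (del_verts_E V E S) u w \<longleftrightarrow> linked E (V - S) u w"
proof -
  have "(\<lambda>x y. x \<in> V - S \<and> y \<in> V - S \<and> adj (del_verts_E V E S) x y) = edge_in E (V - S)"
    by (auto simp: adj_def del_verts_E_def edge_in_def fun_eq_iff)
  then show ?thesis
    by (simp add: reach_def linked_def)
qed

lemma connected_graph_iff_linked:
  "connected_graph V E \<longleftrightarrow> V \<noteq> {} \<and> (\<forall>u\<in>V. \<forall>w\<in>V. linked E V u w)"
  by (simp add: connected_graph_def reach_eq_linked)

lemma components_del_verts:
  "components (del_verts_V V S) (del_verts_E V E S) = component E (V - S) ` (V - S)"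
  by (auto simp: components_def del_verts_V_def reach_del_verts_eq_linked component_def)

lemma Rg_cutset_iff:
  "Rg_cutset g V E S \<longleftrightarrow> S \<subseteq> V \<and> (\<exists>a\<in>V - S. \<exists>b\<in>V - S. \<not> linked E (V - S) a b) \<and>
     (\<forall>u\<in>V - S. g + 1 \<le> card (component E (V - S) u))"
  unfolding Rg_cutset_def cutset_def components_del_verts
  by (auto simp: connected_graph_def del_verts_V_def reach_del_verts_eq_linked)

lemma finite_Rg_cutset_cards:
  assumes "finite V"
  shows "finite {card S | S. Rg_cutset g V E S}"
proof (rule finite_subset)
  show "{card S | S. Rg_cutset g V E S} \<subseteq> {..card V}"
    using assms by (auto simp: Rg_cutset_iff intro: card_mono)
qed simp

lemma extra_connectivity_le:
  assumes "finite V" "Rg_cutset g V E S"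
  shows "extra_connectivity g V E \<le> card S"
  unfolding extra_connectivity_def
  using assms(2) by (intro Min_le finite_Rg_cutset_cards[OF assms(1)]) blast

lemma extra_connectivity_eqI:
  assumes "finite V" "Rg_cutset g V E S" "\<And>S'. Rg_cutset g V E S' \<Longrightarrow> card S \<le> card S'"
  shows "extra_connectivity g V E = card S"
  unfolding extra_connectivity_def
proof (rule Min_eqI[OF finite_Rg_cutset_cards[OF assms(1)]])
  show "card S \<in> {card S | S. Rg_cutset g V E S}"
    using assms(2) by blast
qed (use assms(3) in blast)

lemma Rg_cutset_compl_Union_components:
  assumes "W \<subseteq> V" "F \<subseteq> component E W ` W" "C1 \<in> F" "C2 \<in> F" "C1 \<noteq> C2"
    and big: "\<forall>C\<in>F. g + 1 \<le> card C"
  shows "Rg_cutset g V E (V - \<Union>F)"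
proof -
  let ?U = "\<Union>F"
  have "edge_closed E W C" if "C \<in> F" for C
    using that assms(2) edge_closed_component by fastforce
  then have closed: "edge_closed E W ?U"
    by (simp add: edge_closed_Union)
  then have "?U \<subseteq> W"
    by (simp add: edge_closed_def)
  then have compl: "V - (V - ?U) = ?U"
    using assms(1) by blast
  obtain c1 c2 where c: "c1 \<in> W" "c2 \<in> W" "C1 = component E W c1" "C2 = component E W c2"
    using assms(2-4) by (meson imageE subsetD)
  then have "c1 \<in> C1" "c2 \<in> C2"
    by (simp_all add: self_in_component)
  then have "c1 \<in> ?U" "c2 \<in> ?U"
    using assms(3,4) by (auto intro: UnionI)
  moreover have "\<not> linked E ?U c1 c2"
  proof
    assume "linked E ?U c1 c2"
    then have "linked E W c1 c2"
      by (rule linked_mono[OF \<open>?U \<subseteq> W\<close>])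
    then have "c2 \<in> component E W c1"
      by (simp add: component_def)
    then have "component E W c2 = component E W c1"
      by (rule component_eq)
    then show False
      using c assms(5) by simp
  qed
  moreover have "g + 1 \<le> card (component E ?U u)" if u: "u \<in> ?U" for u
  proof -
    obtain C where "C \<in> F" "u \<in> C"
      using u by blast
    moreover from \<open>C \<in> F\<close> obtain c where "C = component E W c"
      using assms(2) by blast
    ultimately have "component E W u = C"
      using component_eq[of u E W c] by simp
    then show ?thesis
      using component_edge_closed_eq[OF closed u] big \<open>C \<in> F\<close> by simp
  qed
  ultimately show ?thesis
    unfolding Rg_cutset_iff compl by blast
qed

lemma component_contains_neighbour:
  assumes "connected_graph V E" "v \<in> V" "c \<in> V - {v}"
  obtains z where "z \<in> component E (V - {v}) c" "{v, z} \<in> E"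
proof -
  have "linked E V v c"
    using assms by (simp add: connected_graph_iff_linked)
  then obtain z where "{v, z} \<in> E" "linked E (V - {v}) z c"
    using assms(3) by (auto elim: linked_obtains_neighbour)
  then show thesis
    using that[of z] by (simp add: component_def linked_sym)
qed

subsection \<open>Minimum R_g-cutsets of trees\<close>

lemma Rg_cutset_component_eq:
  assumes "finite V" and small: "\<forall>C \<in> component E (V - {v}) ` (V - {v}). card C \<le> g + 1"
    and "Rg_cutset g V E S" "y \<in> V - S" "v \<notin> component E (V - S) y"
  shows "component E (V - S) y = component E (V - {v}) y" "card (component E (V - {v}) y) = g + 1"
proof -
  let ?W = "V - {v}" and ?X = "V - S"
  have "component E ?X y \<subseteq> ?W"
    using assms(5) component_subset[of E ?X y] by blast
  then have sub: "component E ?X y \<subseteq> component E ?W y"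
    by (rule component_subset_component)
  have "y \<in> component E ?W y"
    using sub self_in_component[OF assms(4)] by blast
  then have "y \<in> ?W"
    using component_subset[of E ?W y] by blast
  then have "card (component E ?W y) \<le> g + 1"
    using small by blast
  moreover have fin: "finite (component E ?W y)"
    using assms(1) component_subset[of E ?W y] finite_subset by blast
  moreover have "g + 1 \<le> card (component E ?X y)"
    using assms(3,4) by (simp add: Rg_cutset_iff)
  ultimately show "component E ?X y = component E ?W y" "card (component E ?W y) = g + 1"
    using card_mono[OF fin sub] card_subset_eq[OF fin sub] by linarith+
qed

lemma Rg_cutset_complement_subset:
  assumes "finite V" "connected_graph V E" "v \<in> V"
    and small: "\<forall>C \<in> component E (V - {v}) ` (V - {v}). card C \<le> g + 1"
    and S: "Rg_cutset g V E S"
  shows "V - S \<subseteq> \<Union>{C \<in> component E (V - {v}) ` (V - {v}). card C = g + 1}"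
proof -
  let ?W = "V - {v}" and ?X = "V - S"
  obtain a b where ab: "a \<in> ?X" "b \<in> ?X" "\<not> linked E ?X a b"
    using S unfolding Rg_cutset_iff by blast
  note fills = Rg_cutset_component_eq[OF assms(1) small S]
  have "v \<notin> ?X"
  proof
    assume "v \<in> ?X"
    have "\<exists>y\<in>?X. \<not> linked E ?X v y"
    proof (rule ccontr)
      assume "\<not> ?thesis"
      then have "linked E ?X v a" "linked E ?X v b"
        using ab by blast+
      then have "linked E ?X a b"
        by (rule linked_trans[OF linked_sym])
      with ab show False
        by simp
    qed
    then obtain y where y: "y \<in> ?X" "\<not> linked E ?X v y" ..
    have "v \<notin> component E ?X y"
    proof
      assume "v \<in> component E ?X y"
      then have "linked E ?X v y"
        by (simp add: component_def linked_sym)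
      with y(2) show False ..
    qed
    with y(1) have eq: "component E ?X y = component E ?W y"
      using fills by blast
    have "y \<in> ?W"
      using y(1) \<open>v \<notin> component E ?X y\<close> self_in_component[OF y(1)] by blast
    then obtain z where "z \<in> component E ?W y" "{v, z} \<in> E"
      using component_contains_neighbour[OF assms(2,3)] by blast
    then have "v \<in> component E ?X y"
      using edge_closed_component[of E ?X y] eq \<open>v \<in> ?X\<close>
      by (auto simp: edge_closed_def insert_commute)
    with \<open>v \<notin> component E ?X y\<close> show False ..
  qed
  show ?thesis
  proof
    fix y
    assume "y \<in> ?X"
    then have "v \<notin> component E ?X y"
      using \<open>v \<notin> ?X\<close> component_subset[of E ?X y] by blast
    with \<open>y \<in> ?X\<close> fills have "card (component E ?W y) = g + 1"
      by blast
    moreover have "y \<in> ?W"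
      using \<open>y \<in> ?X\<close> \<open>v \<notin> ?X\<close> by blast
    ultimately show "y \<in> \<Union>{C \<in> component E ?W ` ?W. card C = g + 1}"
      using self_in_component[of y ?W E] by blast
  qed
qed

lemma extra_connectivity_if_type_Tn_star:
  assumes "finite V" "connected_graph V E" "type_Tn_star g V E"
  shows "(\<exists>S. Rg_cutset g V E S) \<and> extra_connectivity g V E = card V - 2 * g - 2"
proof -
  obtain v C1 C2 where v: "v \<in> V"
    and C: "C1 \<in> component E (V - {v}) ` (V - {v})" "C2 \<in> component E (V - {v}) ` (V - {v})"
      "C1 \<noteq> C2" "card C1 = g + 1" "card C2 = g + 1"
    and others: "\<forall>C \<in> component E (V - {v}) ` (V - {v}) - {C1, C2}. card C \<le> g"
    using assms(3) unfolding type_Tn_star_def Let_def components_del_verts by (elim bexE conjE)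
  let ?W = "V - {v}"
  have "Rg_cutset g V E (V - \<Union>{C1, C2})"
    using C by (intro Rg_cutset_compl_Union_components) auto
  then have Rg: "Rg_cutset g V E (V - (C1 \<union> C2))"
    by simp
  have sub: "C1 \<union> C2 \<subseteq> V"
    using C(1,2) component_subset by fast
  then have fin: "finite C1" "finite C2"
    using assms(1) finite_subset by auto
  have "C1 \<inter> C2 = {}"
    using C(1-3) components_disjoint by fast
  then have card_U: "card (C1 \<union> C2) = 2 * g + 2"
    using C(4,5) card_Un_disjoint[OF fin] by simp
  then have card_S: "card (V - (C1 \<union> C2)) = card V - (2 * g + 2)"
    using card_Diff_subset[OF _ sub] fin by simp
  have "card V - (2 * g + 2) \<le> card S" if S: "Rg_cutset g V E S" for S
  proof -
    have "card C \<le> g + 1" if "C \<in> component E ?W ` ?W" for C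
    proof (cases "C \<in> {C1, C2}")
      case False
      with that have "C \<in> component E ?W ` ?W - {C1, C2}"
        by blast
      with others have "card C \<le> g"
        by blast
      then show ?thesis
        by simp
    qed (use C(4,5) in auto)
    then have "V - S \<subseteq> \<Union>{C \<in> component E ?W ` ?W. card C = g + 1}"
      using Rg_cutset_complement_subset[OF assms(1,2) v _ S] by blast
    also have "\<dots> \<subseteq> C1 \<union> C2"
      using others by force
    finally have "card (V - S) \<le> 2 * g + 2"
      using card_mono[of "C1 \<union> C2" "V - S"] fin card_U by simp
    moreover have "S \<subseteq> V"
      using S by (simp add: Rg_cutset_iff)
    then have "card (V - S) = card V - card S"
      using assms(1) by (simp add: card_Diff_subset finite_subset)
    ultimately show ?thesis
      by linarith
  qed
  then have "extra_connectivity g V E = card V - (2 * g + 2)"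
    using extra_connectivity_eqI[OF assms(1) Rg] card_S by simp
  with Rg show ?thesis
    by auto
qed

lemma acyclic_separating_vertex:
  assumes "acyclic_graph V E" "connected_graph V E" "X \<subseteq> V"
    and "a \<in> X" "b \<in> X" "\<not> linked E X a b"
  obtains x where "x \<in> V" "component E X a \<subseteq> component E (V - {x}) a"
    "component E X b \<subseteq> component E (V - {x}) b" "\<not> linked E (V - {x}) a b"
proof -
  \<comment> \<open>x is the last vertex outside A on a path from b to A\<close>
  let ?A = "component E X a" and ?B = "component E X b"
  have "a \<in> ?A" "b \<in> ?B"
    using assms(4,5) by (simp_all add: self_in_component)
  have "b \<notin> ?A"
    using assms(6) by (simp add: component_def)
  have "linked E V b a"
    using assms(2-5) by (auto simp: connected_graph_iff_linked)
  then obtain x y where xy: "x \<in> V - ?A" "y \<in> ?A" "{x, y} \<in> E" "linked E (V - ?A) b x"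
    using \<open>b \<notin> ?A\<close> \<open>a \<in> ?A\<close> by (rule linked_obtains_exit_edge)
  have "x \<notin> ?B"
  proof
    assume "x \<in> ?B"
    moreover have "y \<in> X"
      using xy(2) component_subset by fast
    ultimately have "y \<in> ?B"
      using xy(3) edge_closed_component[of E X b] by (simp add: edge_closed_def)
    then have "?B = ?A"
      using xy(2) component_eq by metis
    with \<open>b \<in> ?B\<close> \<open>b \<notin> ?A\<close> show False
      by simp
  qed
  then have "x \<noteq> b"
    using \<open>b \<in> ?B\<close> by blast
  with linked_sym[OF xy(4)] obtain z
    where z: "z \<in> V - ?A" "{x, z} \<in> E" "linked E (V - ?A - {x}) z b"
    by (rule linked_obtains_neighbour)
  let ?W = "V - {x}"
  have "?A \<subseteq> ?W" "?B \<subseteq> ?W"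
    using xy(1) \<open>x \<notin> ?B\<close> assms(3) component_subset by fast+
  then have sub: "?A \<subseteq> component E ?W a" "?B \<subseteq> component E ?W b"
    by (simp_all add: component_subset_component)
  have "\<not> linked E ?W a b"
  proof
    assume ab: "linked E ?W a b"
    have "y \<in> component E ?W a"
      using sub(1) xy(2) by blast
    then have ya: "linked E ?W y a"
      by (simp add: component_def linked_sym)
    have "linked E ?W z b"
      using z(3) by (rule linked_mono[rotated]) blast
    then have "linked E ?W y z"
      by (rule linked_trans[OF linked_trans[OF ya ab] linked_sym])
    moreover have "y \<noteq> z"
      using xy(2) z(1) by blast
    ultimately show False
      using acyclic_neighbours_not_linked[OF assms(1) _ xy(3) z(2)] xy(1) by blast
  qed
  with sub show thesis
    using xy(1) that by blast
qed

lemma Rg_cutset_obtains_two_big_components: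
  assumes "finite V" "acyclic_graph V E" "connected_graph V E" "Rg_cutset g V E S"
  obtains x C1 C2 where "x \<in> V" "C1 \<in> component E (V - {x}) ` (V - {x})"
    "C2 \<in> component E (V - {x}) ` (V - {x})" "C1 \<noteq> C2" "g + 1 \<le> card C1" "g + 1 \<le> card C2"
proof -
  let ?X = "V - S"
  obtain a b where ab: "a \<in> ?X" "b \<in> ?X" "\<not> linked E ?X a b"
    and big: "\<forall>u\<in>?X. g + 1 \<le> card (component E ?X u)"
    using assms(4) unfolding Rg_cutset_iff by blast
  obtain x where x: "x \<in> V" "component E ?X a \<subseteq> component E (V - {x}) a"
    "component E ?X b \<subseteq> component E (V - {x}) b" "\<not> linked E (V - {x}) a b"
    using acyclic_separating_vertex[OF assms(2,3) Diff_subset ab] by blast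
  let ?W = "V - {x}"
  have fin: "finite (component E ?W u)" for u
    using assms(1) finite_subset[OF component_subset[of E ?W u]] by simp
  have "a \<in> component E ?W a" "b \<in> component E ?W b"
    using x(2,3) self_in_component[OF ab(1)] self_in_component[OF ab(2)] by blast+
  then have "a \<in> ?W" "b \<in> ?W"
    using component_subset[of E ?W a] component_subset[of E ?W b] by blast+
  moreover have "component E ?W a \<noteq> component E ?W b"
    using x(4) \<open>b \<in> component E ?W b\<close> by (auto simp: component_def)
  moreover have "g + 1 \<le> card (component E ?X a)" "g + 1 \<le> card (component E ?X b)"
    using big ab(1,2) by blast+
  then have "g + 1 \<le> card (component E ?W a)" "g + 1 \<le> card (component E ?W b)"
    using card_mono[OF fin x(2)] card_mono[OF fin x(3)] by linarith+
  ultimately show thesis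
    using that[OF x(1)] by blast
qed

lemma type_Tn_star_if_two_big_components:
  assumes "finite V" "x \<in> V"
    and C: "C1 \<in> component E (V - {x}) ` (V - {x})" "C2 \<in> component E (V - {x}) ` (V - {x})"
      "C1 \<noteq> C2" "g + 1 \<le> card C1" "g + 1 \<le> card C2"
    and large: "\<And>S. Rg_cutset g V E S \<Longrightarrow> card V - 2 * g - 2 \<le> card S"
  shows "type_Tn_star g V E"
proof -
  let ?W = "V - {x}"
  define F where "F = {C \<in> component E ?W ` ?W. g + 1 \<le> card C}"
  have finW: "finite ?W"
    using assms(1) by simp
  have FW: "F \<subseteq> component E ?W ` ?W"
    by (auto simp: F_def)
  then have finF: "finite F"
    using finite_subset[OF _ finite_imageI[OF finW]] by blast
  have F: "C1 \<in> F" "C2 \<in> F"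
    using C by (simp_all add: F_def)
  have "Rg_cutset g V E (V - \<Union>F)"
    using FW F C(3) by (rule Rg_cutset_compl_Union_components[OF Diff_subset]) (simp add: F_def)
  then have "card V - (2 * g + 2) \<le> card (V - \<Union>F)"
    using large by simp
  moreover have "\<Union>F \<subseteq> ?W"
    using FW component_subset[of E ?W] by blast
  then have "\<Union>F \<subset> V"
    using \<open>x \<in> V\<close> by blast
  then have "card (\<Union>F) < card V" "card (V - \<Union>F) = card V - card (\<Union>F)"
    using psubset_card_mono[OF assms(1)] card_Diff_subset[OF finite_subset[OF _ assms(1)]] by auto
  moreover have "(\<Sum>C\<in>F. card C) = (\<Sum>C\<in>F - {C1, C2}. card C) + (\<Sum>C\<in>{C1, C2}. card C)"
    using F finF by (intro sum.subset_diff) auto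
  then have sum: "card (\<Union>F) = card C1 + card C2 + (\<Sum>C\<in>F - {C1, C2}. card C)"
    using card_Union_components[OF finW FW] C(3) by simp
  ultimately have "card C1 + card C2 + (\<Sum>C\<in>F - {C1, C2}. card C) \<le> 2 * g + 2"
    using C(4,5) by linarith
  then have "card C1 = g + 1" "card C2 = g + 1" "(\<Sum>C\<in>F - {C1, C2}. card C) = 0"
    using C(4,5) by linarith+
  then have "F - {C1, C2} = {}"
    using finF by (auto simp: F_def)
  then have "\<forall>C \<in> component E ?W ` ?W - {C1, C2}. card C \<le> g"
    by (auto simp: F_def)
  with \<open>x \<in> V\<close> C(1-3) \<open>card C1 = g + 1\<close> \<open>card C2 = g + 1\<close> show ?thesis
    unfolding type_Tn_star_def Let_def components_del_verts
    by (intro bexI[of _ x] bexI[of _ C1] bexI[of _ C2] conjI) simp_all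
qed

theorem theorem4p3:
  fixes V :: "'a set" and E :: "'a set set" and n g :: nat
  assumes "is_tree V E" and "card V = n"
    and "int g \<le> (int n - 3) div 2"
  shows "((\<exists>S. Rg_cutset g V E S) \<and> extra_connectivity g V E = n - 2 * g - 2)
         \<longleftrightarrow> type_Tn_star g V E"
proof -
  have fin: "finite V" and conn: "connected_graph V E" and acyc: "acyclic_graph V E"
    using assms(1) by (simp_all add: is_tree_def simple_graph_def)
  show ?thesis
  proof
    assume kappa: "(\<exists>S. Rg_cutset g V E S) \<and> extra_connectivity g V E = n - 2 * g - 2"
    then obtain S where "Rg_cutset g V E S"
      by blast
    then obtain x C1 C2 where "x \<in> V" "C1 \<in> component E (V - {x}) ` (V - {x})"
      "C2 \<in> component E (V - {x}) ` (V - {x})" "C1 \<noteq> C2" "g + 1 \<le> card C1" "g + 1 \<le> card C2"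
      by (rule Rg_cutset_obtains_two_big_components[OF fin acyc conn])
    moreover have "card V - 2 * g - 2 \<le> card S" if "Rg_cutset g V E S" for S
      using extra_connectivity_le[OF fin that] kappa assms(2) by simp
    ultimately show "type_Tn_star g V E"
      by (rule type_Tn_star_if_two_big_components[OF fin])
  next
    assume "type_Tn_star g V E"
    then show "(\<exists>S. Rg_cutset g V E S) \<and> extra_connectivity g V E = n - 2 * g - 2"
      using extra_connectivity_if_type_Tn_star[OF fin conn] assms(2) by simp
  qed
qed

end
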